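(* Let $n\ge2$, $d\ge1$, $r\ge3$ with $n\ge d$ and $dr\equiv0\pmod n$. (1) If $dr=n$, then $\mathrm{diam}(Q_n(d,r))=n+r$ when $r=3$, and $\mathrm{diam}(Q_n(d,r))=n+\lfloor 3r/2\rfloor-2$ when $r\ge4$. (2) If $dr\ge 2n$, then $\mathrm{diam}(Q_n(d,r))=n+\max\{\lfloor r/2\rfloor,\,2\lceil n/d\rceil-2\}$.
   Context: $\mathbb{Z}_2^n=\{0,1\}^n$ with coordinatewise addition mod 2; $e_i$ is the $i$-th standard basis vector, subscripts read modulo $n$. The recursive cube of rings $Q_n(d,r)$ (for $n\ge d$, $dr\equiv0\pmod n$) is the simple graph on $\mathbb{Z}_2^n\times\mathbb{Z}_r$ in which $(a,x)$ is adjacent to $(a+e_{i+dx},x)$ for $1\le i\le d$ and to $(a,x\pm1)$. *)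

theory Defs
  imports Main
begin

text \<open>Vertices of Q_n(d,r): pairs (a, x) where a \<subseteq> {0..<n} encodes a vector of Z_2^n
  (coordinate k, 0-based, corresponds to e_(k+1)) and x \<in> {0..<r} encodes an element of Z_r.
  Adding e_j is symmetric difference with a singleton.\<close>

definition rcr_vertices :: "nat \<Rightarrow> nat \<Rightarrow> (nat set \<times> nat) set" where
  "rcr_vertices n r = {(a, x). a \<subseteq> {0..<n} \<and> x < r}"

definition flip :: "nat set \<Rightarrow> nat \<Rightarrow> nat set" where
  "flip a k = (a - {k}) \<union> ({k} - a)"

text \<open>Edge relation: (a,x) ~ (a + e_(i+dx), x) for 1 \<le> i \<le> d (0-based: j = i-1 \<in> {0..<d},
  coordinate (j + d*x) mod n), and (a,x) ~ (a, x \<plusminus> 1 mod r).\<close>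

definition rcr_adj :: "nat \<Rightarrow> nat \<Rightarrow> nat \<Rightarrow> (nat set \<times> nat) \<Rightarrow> (nat set \<times> nat) \<Rightarrow> bool" where
  "rcr_adj n d r u v \<longleftrightarrow> u \<in> rcr_vertices n r \<and> v \<in> rcr_vertices n r \<and>
     ((snd v = snd u \<and> (\<exists>j<d. fst v = flip (fst u) ((j + d * snd u) mod n))) \<or>
      (fst v = fst u \<and> (snd v = (snd u + 1) mod r \<or> snd u = (snd v + 1) mod r)))"

definition rcr_edges :: "nat \<Rightarrow> nat \<Rightarrow> nat \<Rightarrow> ((nat set \<times> nat) \<times> (nat set \<times> nat)) set" where
  "rcr_edges n d r = {(u, v). rcr_adj n d r u v}"

definition graph_dist :: "('a \<times> 'a) set \<Rightarrow> 'a \<Rightarrow> 'a \<Rightarrow> nat" where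
  "graph_dist E u v = (LEAST k. (u, v) \<in> E ^^ k)"

definition graph_diam :: "'a set \<Rightarrow> ('a \<times> 'a) set \<Rightarrow> nat" where
  "graph_diam V E = Max {graph_dist E u v | u v. u \<in> V \<and> v \<in> V}"

definition rcr_diam :: "nat \<Rightarrow> nat \<Rightarrow> nat \<Rightarrow> nat" where
  "rcr_diam n d r = graph_diam (rcr_vertices n r) (rcr_edges n d r)"

end

theory Submission
  imports Defs
begin

text \<open>Lift a walk in \<open>Q\<^sub>n(d,r)\<close> along its ring coordinate to a walk on \<open>\<int>\<close>. Since \<open>n\<close> divides \<open>dr\<close>, a flip made
  at lifted position \<open>w\<close> changes one of the coordinates \<open>dw, \<dots>, dw + d - 1 (mod n)\<close>, so a walk whose
  lift stays in \<open>[lo, hi]\<close> can change at most \<open>d(hi - lo + 1)\<close> coordinates, and all \<open>n\<close> of them only if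
  \<open>hi - lo \<ge> p - 1\<close> with \<open>p = \<lceil>n/d\<rceil>\<close>. A walk on \<open>\<int>\<close> from \<open>0\<close> to \<open>z\<close> covering such a window needs at least
  \<open>max |z| (2(p - 1) - |z|)\<close> steps, and this many suffice. Hence walks from \<open>(0, 0)\<close> to \<open>(1\<dots>1, y)\<close> have
  length at least \<open>n + max |z| (2(p - 1) - |z|)\<close> for some lift \<open>z\<close> of \<open>y\<close>, while any two vertices are joined by
  walking to the start of a window ending at the nearer suitable lift of the target and sweeping through it,
  flipping the differing coordinates on the way. The diameter is thus \<open>n\<close> plus a maximin of this expression over
  ring offsets, evaluated separately for \<open>dr = n\<close> (where \<open>p = r\<close>) and for \<open>dr \<ge> 2n\<close>.\<close>

section \<open>Walks and diameter\<close>

definition reachable_within :: "('a \<times> 'a) set \<Rightarrow> nat \<Rightarrow> 'a \<Rightarrow> 'a \<Rightarrow> bool" where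
  "reachable_within E k u v \<longleftrightarrow> (\<exists>k'\<le>k. (u, v) \<in> E ^^ k')"

lemma reachable_within_refl: "reachable_within E k u u"
  unfolding reachable_within_def by (intro exI[of _ 0]) auto

lemma reachable_within_edge: "(u, v) \<in> E \<Longrightarrow> reachable_within E 1 u v"
  unfolding reachable_within_def by (intro exI[of _ 1]) auto

lemma reachable_within_mono: "reachable_within E k u v \<Longrightarrow> k \<le> k' \<Longrightarrow> reachable_within E k' u v"
  unfolding reachable_within_def by (meson order_trans)

lemma reachable_within_trans:
  assumes "reachable_within E k u v" and "reachable_within E l v w"
  shows "reachable_within E (k + l) u w"
proof -
  obtain k' l' where "k' \<le> k" "(u, v) \<in> E ^^ k'" "l' \<le> l" "(v, w) \<in> E ^^ l'"
    using assms unfolding reachable_within_def by blast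
  then have "(u, w) \<in> E ^^ (k' + l')" and "k' + l' \<le> k + l"
    by (auto simp: relpow_add)
  then show ?thesis unfolding reachable_within_def by blast
qed

lemma relpow_sym: "sym E \<Longrightarrow> (u, v) \<in> E ^^ k \<Longrightarrow> (v, u) \<in> E ^^ k"
proof (induction k arbitrary: v)
  case (Suc k)
  then obtain w where "(u, w) \<in> E ^^ k" and "(w, v) \<in> E" by (blast elim: relpow_Suc_E)
  then have "(v, w) \<in> E" and "(w, u) \<in> E ^^ k" using Suc by (auto dest: symD)
  then show ?case by (rule relpow_Suc_I2)
qed simp

lemma reachable_within_sym: "sym E \<Longrightarrow> reachable_within E k u v \<Longrightarrow> reachable_within E k v u"
  unfolding reachable_within_def by (blast dest: relpow_sym)

lemma graph_dist_le: "reachable_within E k u v \<Longrightarrow> graph_dist E u v \<le> k"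
  unfolding reachable_within_def graph_dist_def by (blast intro: Least_le order_trans)

lemma graph_diam_eqI:
  assumes "finite V" and "u\<^sub>0 \<in> V" and "v\<^sub>0 \<in> V"
    and upper: "\<And>u v. u \<in> V \<Longrightarrow> v \<in> V \<Longrightarrow> reachable_within E D u v"
    and lower: "\<And>k. (u\<^sub>0, v\<^sub>0) \<in> E ^^ k \<Longrightarrow> D \<le> k"
  shows "graph_diam V E = D"
proof -
  obtain k where "(u\<^sub>0, v\<^sub>0) \<in> E ^^ k"
    using upper[OF assms(2,3)] unfolding reachable_within_def by blast
  then have "(u\<^sub>0, v\<^sub>0) \<in> E ^^ graph_dist E u\<^sub>0 v\<^sub>0"
    unfolding graph_dist_def by (rule LeastI)
  then have dist: "graph_dist E u\<^sub>0 v\<^sub>0 = D"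
    using lower graph_dist_le[OF upper[OF assms(2,3)]] le_antisym by blast
  have dists: "{graph_dist E u v | u v. u \<in> V \<and> v \<in> V} = (\<lambda>(u, v). graph_dist E u v) ` (V \<times> V)"
    by auto
  show ?thesis
    unfolding graph_diam_def dists
  proof (rule Max_eqI)
    show "finite ((\<lambda>(u, v). graph_dist E u v) ` (V \<times> V))" using assms(1) by simp
    show "y \<le> D" if "y \<in> (\<lambda>(u, v). graph_dist E u v) ` (V \<times> V)" for y
      using that graph_dist_le[OF upper] by auto
    show "D \<in> (\<lambda>(u, v). graph_dist E u v) ` (V \<times> V)"
      using dist assms(2,3) by force
  qed
qed

section \<open>Arithmetic of lifted positions\<close>

lemma le_mult_iff_ceiling_le:
  fixes W :: int
  assumes "0 < d"
  shows "int n \<le> int d * W \<longleftrightarrow> int ((n + d - 1) div d) \<le> W"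
proof (cases "0 \<le> W")
  case True
  then obtain m where W: "W = int m" by (metis nonneg_int_cases)
  have "(n + d - 1) div d < m + 1 \<longleftrightarrow> n + d - 1 < (m + 1) * d"
    using assms by (rule div_less_iff_less_mult)
  also have "\<dots> \<longleftrightarrow> n \<le> d * m"
    using assms by (simp add: algebra_simps) arith
  finally show ?thesis unfolding W by (simp add: less_Suc_eq_le flip: of_nat_mult)
next
  case False
  then have "int d * W < 0" using assms by (simp add: mult_pos_neg)
  then show ?thesis using False by simp
qed

lemma div_ceiling_mult_self:
  fixes m k :: nat
  assumes "0 < m"
  shows "(m * k + m - 1) div m = k"
proof -
  have "(m * k + (m - 1)) div m = k + (m - 1) div m"
    by (rule div_mult_self4) (use assms in simp)
  moreover have "(m - 1) div m = 0" and "m * k + m - 1 = m * k + (m - 1)"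
    using assms by simp_all
  ultimately show ?thesis by simp
qed

lemma double_ceiling_less:
  fixes n d r :: nat
  assumes "0 < d" and "2 * n \<le> d * r"
  shows "2 * ((n + d - 1) div d) < r + 2"
proof -
  define P where "P = (n + d - 1) div d"
  have "P * d \<le> n + d - 1" unfolding P_def by (rule div_times_less_eq_dividend)
  then have "d * (2 * P) < d * (r + 2)"
    using assms by (simp add: algebra_simps)
  then show ?thesis unfolding P_def by (metis mult_less_cancel1)
qed

text \<open>Lifted position \<open>w\<close> (ring position \<open>w mod r\<close>) flips the coordinates \<open>dw + j mod n\<close>, \<open>0 \<le> j < d\<close>
  (see \<open>flip_coord_lift\<close>); these are the coordinates a walk can flip while its lift stays in \<open>[lo, hi]\<close>.\<close>
definition window_coords :: "nat \<Rightarrow> nat \<Rightarrow> int \<Rightarrow> int \<Rightarrow> nat set" where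
  "window_coords n d lo hi = (\<lambda>c. nat (c mod int n)) ` {int d * lo ..< int d * (hi + 1)}"

lemma window_coords_subset: "0 < n \<Longrightarrow> window_coords n d lo hi \<subseteq> {0..<n}"
  unfolding window_coords_def by (auto simp: nat_less_iff)

lemma finite_window_coords [simp]: "finite (window_coords n d lo hi)"
  unfolding window_coords_def by simp

lemma window_coords_mono:
  assumes "lo' \<le> lo" and "hi \<le> hi'"
  shows "window_coords n d lo hi \<subseteq> window_coords n d lo' hi'"
proof -
  have "int d * lo' \<le> int d * lo" and "int d * (hi + 1) \<le> int d * (hi' + 1)"
    using assms by (simp_all add: mult_left_mono)
  then show ?thesis unfolding window_coords_def by (intro image_mono) auto
qed

lemma window_coords_split:
  "window_coords n d lo hi \<subseteq> window_coords n d lo lo \<union> window_coords n d (lo + 1) hi"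
proof -
  have "{int d * lo ..< int d * (hi + 1)}
      \<subseteq> {int d * lo ..< int d * (lo + 1)} \<union> {int d * (lo + 1) ..< int d * (hi + 1)}"
    by auto
  then show ?thesis unfolding window_coords_def by (auto simp flip: image_Un)
qed

lemma card_window_coords_le: "card (window_coords n d lo hi) \<le> nat (int d * (hi - lo + 1))"
proof -
  have "card (window_coords n d lo hi) \<le> card {int d * lo ..< int d * (hi + 1)}"
    unfolding window_coords_def by (rule card_image_le) simp
  then show ?thesis by (simp add: algebra_simps)
qed

lemma all_coords_in_window_iff:
  assumes "0 < n"
  shows "{0..<n} \<subseteq> window_coords n d lo hi \<longleftrightarrow> int n \<le> int d * (hi - lo + 1)"
proof
  assume "{0..<n} \<subseteq> window_coords n d lo hi"
  then have "card {0..<n} \<le> card (window_coords n d lo hi)"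
    by (intro card_mono) simp_all
  then show "int n \<le> int d * (hi - lo + 1)"
    using card_window_coords_le[of n d lo hi] assms by simp
next
  assume long: "int n \<le> int d * (hi - lo + 1)"
  show "{0..<n} \<subseteq> window_coords n d lo hi"
  proof
    fix c assume c: "c \<in> {0..<n}"
    define c' where "c' = int d * lo + (int c - int d * lo) mod int n"
    have "c' mod int n = int c"
      using c unfolding c'_def by (simp add: mod_add_right_eq)
    moreover have "int d * lo \<le> c'" and "c' < int d * lo + int n"
      using assms unfolding c'_def by simp_all
    moreover have "int d * lo + int n \<le> int d * (hi + 1)"
      using long by (simp add: algebra_simps)
    ultimately have "c' \<in> {int d * lo ..< int d * (hi + 1)}" and "c = nat (c' mod int n)"
      by simp_all
    then show "c \<in> window_coords n d lo hi"
      unfolding window_coords_def by blast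
  qed
qed

text \<open>The fewest steps of a walk on \<open>\<int>\<close> that starts at \<open>0\<close>, ends at distance \<open>D \<ge> 0\<close> from \<open>0\<close> and visits
  \<open>p\<close> consecutive integers.\<close>
definition min_layer_moves :: "int \<Rightarrow> int \<Rightarrow> int" where
  "min_layer_moves p D = max D (2 * (p - 1) - D)"

lemma window_start_exists:
  fixes x e p :: int
  shows "\<exists>q. p - 1 \<le> \<bar>e - q\<bar> \<and> \<bar>x - q\<bar> + \<bar>e - q\<bar> = min_layer_moves p \<bar>e - x\<bar>"
proof (cases "p - 1 \<le> \<bar>e - x\<bar>")
  case True
  then show ?thesis by (intro exI[of _ x]) (simp add: min_layer_moves_def)
next
  case False
  define s where "s = p - 1 - \<bar>e - x\<bar>"
  show ?thesis
    using False by (intro exI[of _ "if x \<le> e then x - s else x + s"])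
      (auto simp: min_layer_moves_def s_def)
qed

lemma min_layer_moves_le: "\<bar>z\<bar> \<le> L \<Longrightarrow> p - 1 \<le> L \<Longrightarrow> min_layer_moves p \<bar>z\<bar> \<le> 2 * L - \<bar>z\<bar>"
  by (simp add: min_layer_moves_def)

lemma abs_cases_of_mod_eq:
  fixes z r h :: int
  assumes "0 < r" and "z mod r = h" and "2 * h \<le> r"
  shows "\<bar>z\<bar> = h \<or> \<bar>z\<bar> = r - h \<or> r + h \<le> \<bar>z\<bar>"
proof -
  have z: "z = r * (z div r) + h"
    using assms(2) by (metis div_mult_mod_eq mult.commute)
  have "0 \<le> h" using assms(1,2) pos_mod_sign by blast
  consider "z div r = 0" | "z div r = -1" | "1 \<le> z div r" | "z div r \<le> -2" by linarith
  then show ?thesis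
  proof cases
    case 3
    then have "r \<le> r * (z div r)" using assms(1) by simp
    then show ?thesis using z \<open>0 \<le> h\<close> by linarith
  next
    case 4
    then have "r * (z div r) \<le> r * -2" using assms(1) by (intro mult_left_mono) simp_all
    then show ?thesis using z assms(3) by linarith
  qed (use z \<open>0 \<le> h\<close> assms in auto)
qed

lemma lifts_at_residue_distance:
  fixes x y r :: int
  assumes "0 < r" and "0 \<le> y" and "y < r"
  shows "\<exists>e. e mod r = y \<and> \<bar>e - x\<bar> = (y - x) mod r"
    and "\<exists>e. e mod r = y \<and> \<bar>e - x\<bar> = r - (y - x) mod r"
proof -
  define t where "t = (y - x) mod r"
  have "0 \<le> t" and "t < r" using assms(1) unfolding t_def by simp_all
  have up: "(x + t) mod r = y"
    using assms unfolding t_def by (simp add: mod_add_right_eq)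
  then have "(x + t - r) mod r = y" by (simp add: mod_diff_left_eq[symmetric])
  then show "\<exists>e. e mod r = y \<and> \<bar>e - x\<bar> = r - t"
    using \<open>t < r\<close> by (intro exI[of _ "x + t - r"]) simp
  show "\<exists>e. e mod r = y \<and> \<bar>e - x\<bar> = t"
    using up \<open>0 \<le> t\<close> by (intro exI[of _ "x + t"]) simp
qed

lemma min_layer_moves_exact_cover_upper:
  fixes r t :: int
  assumes "4 \<le> r" and "0 \<le> t" and "t < r"
  shows "min (min_layer_moves r t) (min_layer_moves r (r - t)) \<le> r + r div 2 - 2"
proof -
  have "2 * (r div 2) \<le> r" and "r \<le> 2 * (r div 2) + 1" by linarith+
  then show ?thesis
  proof (cases "t \<le> r div 2")
    case True
    then have "min_layer_moves r (r - t) \<le> r + r div 2 - 2"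
      using assms by (simp add: min_layer_moves_def)
    then show ?thesis by (rule min.coboundedI2)
  next
    case False
    then have "min_layer_moves r t \<le> r + r div 2 - 2"
      using assms \<open>r \<le> 2 * (r div 2) + 1\<close> by (simp add: min_layer_moves_def)
    then show ?thesis by (rule min.coboundedI1)
  qed
qed

lemma min_layer_moves_exact_cover_lower:
  fixes r z :: int
  assumes "4 \<le> r" and "z mod r = r div 2"
  shows "r + r div 2 - 2 \<le> min_layer_moves r \<bar>z\<bar>"
proof -
  have "2 * (r div 2) \<le> r" by linarith
  then show ?thesis
    using abs_cases_of_mod_eq[OF _ assms(2)] assms(1) by (auto simp: min_layer_moves_def)
qed

lemma min_layer_moves_double_cover_upper:
  fixes p r t :: int
  assumes "0 \<le> t" and "t < r"
  shows "min (min_layer_moves p t) (min_layer_moves p (r - t)) \<le> max (r div 2) (2 * p - 2)"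
proof (cases "t \<le> r div 2")
  case True
  then have "min_layer_moves p t \<le> max (r div 2) (2 * p - 2)"
    using assms by (auto simp: min_layer_moves_def max_def)
  then show ?thesis by (rule min.coboundedI1)
next
  case False
  moreover have "r \<le> 2 * (r div 2) + 1" by linarith
  ultimately have "min_layer_moves p (r - t) \<le> max (r div 2) (2 * p - 2)"
    using assms by (auto simp: min_layer_moves_def max_def)
  then show ?thesis by (rule min.coboundedI2)
qed

section \<open>Walks in the recursive cube of rings\<close>

lemma flip_flip [simp]: "flip (flip a k) k = a"
  unfolding flip_def by auto

lemma sym_rcr_edges: "sym (rcr_edges n d r)"
proof (rule symI)
  fix u v assume "(u, v) \<in> rcr_edges n d r"
  then have "rcr_adj n d r u v" by (simp add: rcr_edges_def)
  then have "rcr_adj n d r v u" unfolding rcr_adj_def by auto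
  then show "(v, u) \<in> rcr_edges n d r" by (simp add: rcr_edges_def)
qed

lemma reachable_within_rcr_adj: "rcr_adj n d r u v \<Longrightarrow> reachable_within (rcr_edges n d r) 1 u v"
  by (rule reachable_within_edge) (simp add: rcr_edges_def)

abbreviation layer_of :: "nat \<Rightarrow> int \<Rightarrow> nat" where
  "layer_of r z \<equiv> nat (z mod int r)"

text \<open>A walk of length \<open>k\<close> from \<open>({}, 0)\<close> to \<open>(a, x)\<close> lifts to a walk on \<open>\<int>\<close> from \<open>0\<close> to some \<open>z\<close> within
  \<open>[lo, hi]\<close>; every coordinate in \<open>a\<close> was flipped inside that window, and the lift alone has at least
  \<open>2(hi - lo) - |z|\<close> steps, the length of the shortest walk on \<open>\<int>\<close> from \<open>0\<close> to \<open>z\<close> covering \<open>[lo, hi]\<close>.\<close>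
definition lift_witness :: "nat \<Rightarrow> nat \<Rightarrow> nat \<Rightarrow> nat \<Rightarrow> nat set \<Rightarrow> nat \<Rightarrow> int \<Rightarrow> int \<Rightarrow> int \<Rightarrow> bool" where
  "lift_witness n d r k a x z lo hi \<longleftrightarrow>
     lo \<le> min 0 z \<and> max 0 z \<le> hi \<and> z mod int r = int x \<and>
     a \<subseteq> window_coords n d lo hi \<and> int (card a) + 2 * (hi - lo) - \<bar>z\<bar> \<le> int k"

context
  fixes n d r :: nat
  assumes n_pos: "0 < n" and d_pos: "0 < d" and r_pos: "0 < r" and n_dvd: "n dvd d * r"
begin

lemma flip_coord_lift:
  assumes "z mod int r = int x"
  shows "(j + d * x) mod n = nat ((int d * z + int j) mod int n)"
proof -
  obtain c where c: "d * r = n * c" using n_dvd by (auto elim: dvdE)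
  have z: "z = int r * (z div int r) + int x"
    using assms by (metis div_mult_mod_eq mult.commute)
  have "int d * z = int (d * r) * (z div int r) + int d * int x"
    by (subst z) (simp add: algebra_simps)
  also have "\<dots> = int n * (int c * (z div int r)) + int d * int x"
    by (simp add: c)
  finally have "(int d * z + int j) mod int n
      = (int (j + d * x) + int n * (int c * (z div int r))) mod int n"
    by (simp add: algebra_simps)
  also have "\<dots> = int (j + d * x) mod int n"
    by simp
  finally show ?thesis by (metis nat_int of_nat_mod)
qed

lemma window_coords_layer:
  assumes "z mod int r = int x"
  shows "window_coords n d z z = {(j + d * x) mod n | j. j < d}"
proof -
  have "{int d * z ..< int d * (z + 1)} = (\<lambda>j. int d * z + int j) ` {..<d}"
  proof (intro set_eqI iffI)
    fix c assume "c \<in> {int d * z ..< int d * (z + 1)}"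
    then show "c \<in> (\<lambda>j. int d * z + int j) ` {..<d}"
      by (intro image_eqI[of _ _ "nat (c - int d * z)"]) (auto simp: algebra_simps)
  qed (auto simp: algebra_simps)
  then have "window_coords n d z z = (\<lambda>j. nat ((int d * z + int j) mod int n)) ` {..<d}"
    unfolding window_coords_def by (simp add: image_image)
  also have "\<dots> = (\<lambda>j. (j + d * x) mod n) ` {..<d}"
    using flip_coord_lift[OF assms] by simp
  finally show ?thesis by auto
qed

lemma layer_of_succ: "layer_of r (z + 1) = (layer_of r z + 1) mod r"
proof -
  have "int ((layer_of r z + 1) mod r) = (z mod int r + 1) mod int r"
    using r_pos by (simp add: of_nat_mod add.commute)
  then show ?thesis by (simp add: mod_add_left_eq)
qed

lemma rcr_adj_succ: "a \<subseteq> {0..<n} \<Longrightarrow> rcr_adj n d r (a, layer_of r z) (a, layer_of r (z + 1))"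
  unfolding rcr_adj_def rcr_vertices_def layer_of_succ using r_pos by (simp add: nat_less_iff)

lemma rcr_adj_flip:
  "a \<subseteq> {0..<n} \<Longrightarrow> x < r \<Longrightarrow> j < d \<Longrightarrow> rcr_adj n d r (a, x) (flip a ((j + d * x) mod n), x)"
  unfolding rcr_adj_def rcr_vertices_def flip_def using n_pos by auto

lemma reachable_flip_layer:
  assumes "S \<subseteq> window_coords n d z z" and "a \<subseteq> {0..<n}"
  shows "reachable_within (rcr_edges n d r) (card S) (a, layer_of r z) (sym_diff a S, layer_of r z)"
proof -
  have "finite S" using assms(1) by (rule finite_subset) simp
  then show ?thesis using assms
  proof (induction S rule: finite_induct)
    case empty
    then show ?case by (simp add: reachable_within_refl)
  next
    case (insert k S)
    have "z mod int r = int (layer_of r z)" using r_pos by simp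
    from window_coords_layer[OF this] insert.prems(1)
    obtain j where "j < d" and k: "k = (j + d * layer_of r z) mod n"
      by auto
    have "sym_diff a S \<subseteq> {0..<n}"
      using insert.prems window_coords_subset[OF n_pos, of d z z] by auto
    then have "rcr_adj n d r (sym_diff a S, layer_of r z) (flip (sym_diff a S) k, layer_of r z)"
      unfolding k using \<open>j < d\<close> r_pos by (intro rcr_adj_flip) (simp_all add: nat_less_iff)
    moreover have "flip (sym_diff a S) k = sym_diff a (insert k S)"
      using insert.hyps(2) unfolding flip_def by auto
    ultimately have "reachable_within (rcr_edges n d r) 1
        (sym_diff a S, layer_of r z) (sym_diff a (insert k S), layer_of r z)"
      by (metis reachable_within_rcr_adj)
    moreover have "reachable_within (rcr_edges n d r) (card S) (a, layer_of r z) (sym_diff a S, layer_of r z)"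
      using insert by simp
    ultimately show ?case
      using reachable_within_trans insert.hyps by fastforce
  qed
qed

lemma reachable_sweep_up:
  assumes "S \<subseteq> window_coords n d s (s + int L)" and "a \<subseteq> {0..<n}"
  shows "reachable_within (rcr_edges n d r) (L + card S)
           (a, layer_of r s) (sym_diff a S, layer_of r (s + int L))"
  using assms
proof (induction L arbitrary: s a S)
  case 0
  then show ?case using reachable_flip_layer by simp
next
  case (Suc L)
  define S\<^sub>1 where "S\<^sub>1 = S \<inter> window_coords n d s s"
  define S\<^sub>2 where "S\<^sub>2 = S - window_coords n d s s"
  have "S\<^sub>1 \<subseteq> window_coords n d s s" unfolding S\<^sub>1_def by blast
  have "S\<^sub>2 \<subseteq> window_coords n d (s + 1) (s + 1 + int L)"
    using Suc.prems(1) window_coords_split[of n d s "s + 1 + int L"]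
    unfolding S\<^sub>2_def by (auto simp: add.assoc)
  have a\<^sub>1: "sym_diff a S\<^sub>1 \<subseteq> {0..<n}"
    using Suc.prems(2) \<open>S\<^sub>1 \<subseteq> _\<close> window_coords_subset[OF n_pos, of d s s] by auto
  have "reachable_within (rcr_edges n d r) (card S\<^sub>1 + 1 + (L + card S\<^sub>2))
      (a, layer_of r s) (sym_diff (sym_diff a S\<^sub>1) S\<^sub>2, layer_of r (s + 1 + int L))"
  proof (rule reachable_within_trans[OF reachable_within_trans])
    show "reachable_within (rcr_edges n d r) (card S\<^sub>1)
      (a, layer_of r s) (sym_diff a S\<^sub>1, layer_of r s)"
      by (rule reachable_flip_layer[OF \<open>S\<^sub>1 \<subseteq> _\<close> Suc.prems(2)])
    show "reachable_within (rcr_edges n d r) 1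
      (sym_diff a S\<^sub>1, layer_of r s) (sym_diff a S\<^sub>1, layer_of r (s + 1))"
      by (rule reachable_within_rcr_adj[OF rcr_adj_succ[OF a\<^sub>1]])
    show "reachable_within (rcr_edges n d r) (L + card S\<^sub>2)
      (sym_diff a S\<^sub>1, layer_of r (s + 1)) (sym_diff (sym_diff a S\<^sub>1) S\<^sub>2, layer_of r (s + 1 + int L))"
      by (rule Suc.IH[OF \<open>S\<^sub>2 \<subseteq> _\<close> a\<^sub>1])
  qed
  moreover have "sym_diff (sym_diff a S\<^sub>1) S\<^sub>2 = sym_diff a S"
    unfolding S\<^sub>1_def S\<^sub>2_def by auto
  moreover have "card S = card S\<^sub>1 + card S\<^sub>2"
    unfolding S\<^sub>1_def S\<^sub>2_def using Suc.prems(1) by (metis card_Int_Diff finite_subset finite_window_coords)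
  ultimately show ?case by (simp add: ac_simps)
qed

lemma reachable_sweep:
  assumes "S \<subseteq> window_coords n d (min s e) (max s e)" and "a \<subseteq> {0..<n}"
  shows "reachable_within (rcr_edges n d r) (nat \<bar>e - s\<bar> + card S)
           (a, layer_of r s) (sym_diff a S, layer_of r e)"
proof (cases "s \<le> e")
  case True
  then show ?thesis using reachable_sweep_up[of S s "nat (e - s)" a] assms by simp
next
  case False
  \<comment> \<open>sweep upwards from e back to s, starting at the target state, and reverse the walk\<close>
  have "sym_diff a S \<subseteq> {0..<n}"
    using assms window_coords_subset[OF n_pos, of d "min s e" "max s e"] by auto
  then have "reachable_within (rcr_edges n d r) (nat (s - e) + card S)
      (sym_diff a S, layer_of r e) (sym_diff (sym_diff a S) S, layer_of r s)"
    using reachable_sweep_up[of S e "nat (s - e)" "sym_diff a S"] assms(1) False by simp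
  moreover have "sym_diff (sym_diff a S) S = a" by auto
  ultimately show ?thesis
    using False reachable_within_sym[OF sym_rcr_edges] by simp
qed

lemma reachable_via_window:
  fixes q e :: int
  assumes "a \<subseteq> {0..<n}" and "b \<subseteq> {0..<n}" and "x < r" and "e mod int r = int y"
    and window: "int ((n + d - 1) div d) - 1 \<le> \<bar>e - q\<bar>"
  shows "reachable_within (rcr_edges n d r) (n + nat (\<bar>int x - q\<bar> + \<bar>e - q\<bar>)) (a, x) (b, y)"
proof -
  define S where "S = sym_diff a b"
  have "S \<subseteq> {0..<n}" and "sym_diff a S = b"
    using assms(1,2) unfolding S_def by auto
  moreover have "\<bar>e - q\<bar> = max q e - min q e" by auto
  then have "int n \<le> int d * (max q e - min q e + 1)"
    unfolding le_mult_iff_ceiling_le[OF d_pos] using window by linarith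
  ultimately have "S \<subseteq> window_coords n d (min q e) (max q e)"
    using all_coords_in_window_iff[OF n_pos] by blast
  have "reachable_within (rcr_edges n d r) (nat \<bar>q - int x\<bar>) (a, x) (a, layer_of r q)"
    using reachable_sweep[of "{}" "int x" q a] assms(1,3) by simp
  moreover have "reachable_within (rcr_edges n d r) (nat \<bar>e - q\<bar> + card S)
      (a, layer_of r q) (b, y)"
    using reachable_sweep[OF \<open>S \<subseteq> window_coords _ _ _ _\<close> assms(1)] \<open>sym_diff a S = b\<close> assms(4)
    by simp
  ultimately have "reachable_within (rcr_edges n d r) (nat \<bar>q - int x\<bar> + (nat \<bar>e - q\<bar> + card S))
      (a, x) (b, y)"
    by (rule reachable_within_trans)
  moreover have "card S \<le> n"
    using card_mono[OF _ \<open>S \<subseteq> {0..<n}\<close>] by simp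
  then have "nat \<bar>q - int x\<bar> + (nat \<bar>e - q\<bar> + card S) \<le> n + nat (\<bar>int x - q\<bar> + \<bar>e - q\<bar>)"
    by (simp add: nat_add_distrib abs_minus_commute)
  ultimately show ?thesis
    by (rule reachable_within_mono)
qed

lemma reachable_min_layer_moves:
  assumes "a \<subseteq> {0..<n}" and "b \<subseteq> {0..<n}" and "x < r" and "y < r"
  defines "p \<equiv> int ((n + d - 1) div d)" and "t \<equiv> (int y - int x) mod int r"
  shows "reachable_within (rcr_edges n d r)
           (n + nat (min (min_layer_moves p t) (min_layer_moves p (int r - t)))) (a, x) (b, y)"
proof -
  have reach: "reachable_within (rcr_edges n d r) (n + nat (min_layer_moves p \<bar>e - int x\<bar>)) (a, x) (b, y)"
    if "e mod int r = int y" for e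
  proof -
    obtain q where "p - 1 \<le> \<bar>e - q\<bar>"
      and moves: "\<bar>int x - q\<bar> + \<bar>e - q\<bar> = min_layer_moves p \<bar>e - int x\<bar>"
      using window_start_exists by blast
    then show ?thesis
      using reachable_via_window[OF assms(1-3) that, of q] unfolding p_def by (simp only: moves)
  qed
  obtain e\<^sub>1 e\<^sub>2 where "e\<^sub>1 mod int r = int y" "\<bar>e\<^sub>1 - int x\<bar> = t"
    and "e\<^sub>2 mod int r = int y" "\<bar>e\<^sub>2 - int x\<bar> = int r - t"
    using lifts_at_residue_distance[of "int r" "int y" "int x"] r_pos assms(4) unfolding t_def by auto
  then show ?thesis
    using reach[of e\<^sub>1] reach[of e\<^sub>2] by (auto simp: min_def)
qed

lemma lift_witness_flip:
  assumes "lift_witness n d r k a x z lo hi" and "j < d"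
  shows "lift_witness n d r (Suc k) (flip a ((j + d * x) mod n)) x z lo hi"
proof -
  define c where "c = (j + d * x) mod n"
  from assms(1) have range: "lo \<le> min 0 z" "max 0 z \<le> hi" and z: "z mod int r = int x"
    and a: "a \<subseteq> window_coords n d lo hi" and cost: "int (card a) + 2 * (hi - lo) - \<bar>z\<bar> \<le> int k"
    unfolding lift_witness_def by auto
  have "c \<in> window_coords n d z z"
    using window_coords_layer[OF z] assms(2) unfolding c_def by auto
  moreover have "window_coords n d z z \<subseteq> window_coords n d lo hi"
    using range by (intro window_coords_mono) auto
  ultimately have c: "c \<in> window_coords n d lo hi" by blast
  have b: "flip a c \<subseteq> insert c a" unfolding flip_def by auto
  have "finite a" using a by (rule finite_subset) simp
  then have "card (flip a c) \<le> card a + 1"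
    using card_mono[OF _ b] by (simp add: card_insert_if split: if_splits)
  then show ?thesis
    unfolding lift_witness_def c_def[symmetric] using range z a b c cost by auto
qed

lemma lift_witness_succ:
  assumes "lift_witness n d r k a x z lo hi"
  shows "lift_witness n d r (Suc k) a ((x + 1) mod r) (z + 1) lo (max hi (z + 1))"
proof -
  from assms have range: "lo \<le> min 0 z" "max 0 z \<le> hi" and z: "z mod int r = int x"
    and a: "a \<subseteq> window_coords n d lo hi" and cost: "int (card a) + 2 * (hi - lo) - \<bar>z\<bar> \<le> int k"
    unfolding lift_witness_def by auto
  have "(z + 1) mod int r = (int x + 1) mod int r"
    using z by (metis mod_add_left_eq)
  also have "\<dots> = int ((x + 1) mod r)"
    by (simp add: of_nat_mod ac_simps)
  finally have "(z + 1) mod int r = int ((x + 1) mod r)" .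
  moreover have "a \<subseteq> window_coords n d lo (max hi (z + 1))"
    using a window_coords_mono[of lo lo hi "max hi (z + 1)" n d] by auto
  moreover have "int (card a) + 2 * (max hi (z + 1) - lo) - \<bar>z + 1\<bar> \<le> int (Suc k)"
    using cost range by (auto simp: max_def min_def abs_if split: if_splits)
  ultimately show ?thesis
    unfolding lift_witness_def using range by auto
qed

lemma lift_witness_pred:
  assumes "lift_witness n d r k a x z lo hi" and "y < r" and "x = (y + 1) mod r"
  shows "lift_witness n d r (Suc k) a y (z - 1) (min lo (z - 1)) hi"
proof -
  from assms(1) have range: "lo \<le> min 0 z" "max 0 z \<le> hi" and z: "z mod int r = int x"
    and a: "a \<subseteq> window_coords n d lo hi" and cost: "int (card a) + 2 * (hi - lo) - \<bar>z\<bar> \<le> int k"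
    unfolding lift_witness_def by auto
  have zy: "z mod int r = (int y + 1) mod int r"
    using z assms(3) by (simp add: of_nat_mod ac_simps)
  have "(z - 1) mod int r = (z mod int r - 1) mod int r"
    by (simp add: mod_diff_left_eq)
  also have "\<dots> = (int y + 1 - 1) mod int r"
    unfolding zy by (simp add: mod_diff_left_eq)
  also have "\<dots> = int y" using assms(2) by simp
  finally have "(z - 1) mod int r = int y" .
  moreover have "a \<subseteq> window_coords n d (min lo (z - 1)) hi"
    using a window_coords_mono[of "min lo (z - 1)" lo hi hi n d] by auto
  moreover have "int (card a) + 2 * (hi - min lo (z - 1)) - \<bar>z - 1\<bar> \<le> int (Suc k)"
    using cost range by (auto simp: max_def min_def abs_if split: if_splits)
  ultimately show ?thesis
    unfolding lift_witness_def using range by auto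
qed

lemma lift_witness_walk:
  "(({}, 0), (a, x)) \<in> rcr_edges n d r ^^ k \<Longrightarrow> \<exists>z lo hi. lift_witness n d r k a x z lo hi"
proof (induction k arbitrary: a x)
  case 0
  then have "a = {}" and "x = 0" by simp_all
  then show ?case
    unfolding lift_witness_def by (intro exI[of _ 0]) simp
next
  case (Suc k)
  then obtain a\<^sub>0 x\<^sub>0 where "(({}, 0), (a\<^sub>0, x\<^sub>0)) \<in> rcr_edges n d r ^^ k"
    and adj: "rcr_adj n d r (a\<^sub>0, x\<^sub>0) (a, x)"
    by (auto simp: rcr_edges_def elim: relpow_Suc_E)
  then obtain z lo hi where w: "lift_witness n d r k a\<^sub>0 x\<^sub>0 z lo hi"
    using Suc.IH by blast
  have "x < r" using adj by (simp add: rcr_adj_def rcr_vertices_def)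
  from adj consider (flip) j where "x = x\<^sub>0" "j < d" "a = flip a\<^sub>0 ((j + d * x\<^sub>0) mod n)"
    | (succ) "a = a\<^sub>0" "x = (x\<^sub>0 + 1) mod r" | (pred) "a = a\<^sub>0" "x\<^sub>0 = (x + 1) mod r"
    unfolding rcr_adj_def by auto
  then show ?case
  proof cases
    case flip
    then show ?thesis using lift_witness_flip[OF w] by blast
  next
    case succ
    then show ?thesis using lift_witness_succ[OF w] by blast
  next
    case pred
    then show ?thesis using lift_witness_pred[OF w \<open>x < r\<close>] by blast
  qed
qed

lemma length_walk_to_all_ones:
  assumes "(({}, 0), ({0..<n}, y)) \<in> rcr_edges n d r ^^ k"
  shows "\<exists>z. z mod int r = int y \<and> int n + min_layer_moves (int ((n + d - 1) div d)) \<bar>z\<bar> \<le> int k"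
proof -
  obtain z lo hi where range: "lo \<le> min 0 z" "max 0 z \<le> hi" and "z mod int r = int y"
    and "{0..<n} \<subseteq> window_coords n d lo hi" and cost: "int n + 2 * (hi - lo) - \<bar>z\<bar> \<le> int k"
    using lift_witness_walk[OF assms] unfolding lift_witness_def by auto
  then have "int ((n + d - 1) div d) - 1 \<le> hi - lo"
    using all_coords_in_window_iff[OF n_pos] le_mult_iff_ceiling_le[OF d_pos] by simp
  moreover have "\<bar>z\<bar> \<le> hi - lo" using range by auto
  ultimately show ?thesis
    using min_layer_moves_le cost \<open>z mod int r = int y\<close> by fastforce
qed

text \<open>In the upper bound \<open>t\<close> is the ring offset from source to target, and the two arguments of \<open>min\<close>
  correspond to the nearest lifts of the target on either side.\<close>
lemma rcr_diam_eqI: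
  fixes C y :: nat
  defines "p \<equiv> int ((n + d - 1) div d)"
  assumes "y < r"
    and upper: "\<And>t. 0 \<le> t \<Longrightarrow> t < int r \<Longrightarrow>
                  min (min_layer_moves p t) (min_layer_moves p (int r - t)) \<le> int C"
    and lower: "\<And>z. z mod int r = int y \<Longrightarrow> int C \<le> min_layer_moves p \<bar>z\<bar>"
  shows "rcr_diam n d r = n + C"
  unfolding rcr_diam_def
proof (rule graph_diam_eqI)
  show "finite (rcr_vertices n r)"
    by (rule finite_subset[of _ "Pow {0..<n} \<times> {0..<r}"]) (auto simp: rcr_vertices_def)
  show "({}, 0) \<in> rcr_vertices n r" and "({0..<n}, y) \<in> rcr_vertices n r"
    using r_pos \<open>y < r\<close> by (auto simp: rcr_vertices_def)
next
  fix u v assume "u \<in> rcr_vertices n r" and "v \<in> rcr_vertices n r"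
  moreover obtain a x b y' where u: "u = (a, x)" and v: "v = (b, y')" by fastforce
  ultimately have "a \<subseteq> {0..<n}" "x < r" "b \<subseteq> {0..<n}" "y' < r"
    by (simp_all add: rcr_vertices_def)
  define t where "t = (int y' - int x) mod int r"
  have reach: "reachable_within (rcr_edges n d r)
      (n + nat (min (min_layer_moves p t) (min_layer_moves p (int r - t)))) u v"
    unfolding u v p_def t_def by (rule reachable_min_layer_moves) fact+
  have "0 \<le> t" and "t < int r" using r_pos unfolding t_def by simp_all
  then have "n + nat (min (min_layer_moves p t) (min_layer_moves p (int r - t))) \<le> n + C"
    using upper by (simp add: nat_le_iff)
  with reach show "reachable_within (rcr_edges n d r) (n + C) u v"
    by (rule reachable_within_mono)
next
  fix k assume "(({}, 0), ({0..<n}, y)) \<in> rcr_edges n d r ^^ k"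
  then obtain z where "z mod int r = int y" and "int n + min_layer_moves p \<bar>z\<bar> \<le> int k"
    using length_walk_to_all_ones unfolding p_def by blast
  moreover have "int C \<le> min_layer_moves p \<bar>z\<bar>" using lower[OF \<open>z mod int r = int y\<close>] .
  ultimately show "n + C \<le> k" by linarith
qed

lemma rcr_diam_exact_cover_3:
  assumes "d * r = n" and "r = 3"
  shows "rcr_diam n d r = n + r"
proof (rule rcr_diam_eqI)
  have p: "int ((n + d - 1) div d) = 3"
    using assms d_pos by (metis div_ceiling_mult_self of_nat_numeral)
  show "0 < r" using r_pos .
  show "min (min_layer_moves (int ((n + d - 1) div d)) t)
          (min_layer_moves (int ((n + d - 1) div d)) (int r - t)) \<le> int r"
    if "0 \<le> t" "t < int r" for t
    using that assms(2) unfolding p by (auto simp: min_layer_moves_def)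
  show "int r \<le> min_layer_moves (int ((n + d - 1) div d)) \<bar>z\<bar>" if "z mod int r = int 0" for z
    using abs_cases_of_mod_eq[of "int r" z 0] that assms(2) unfolding p
    by (auto simp: min_layer_moves_def)
qed

lemma rcr_diam_exact_cover:
  assumes "d * r = n" and "4 \<le> r"
  shows "rcr_diam n d r = n + (r + r div 2 - 2)"
proof (rule rcr_diam_eqI)
  have p: "int ((n + d - 1) div d) = int r"
    using assms d_pos by (metis div_ceiling_mult_self)
  have C: "int (r + r div 2 - 2) = int r + int r div 2 - 2"
    using assms(2) by (simp add: zdiv_int)
  show "r div 2 < r" using r_pos by simp
  show "min (min_layer_moves (int ((n + d - 1) div d)) t)
          (min_layer_moves (int ((n + d - 1) div d)) (int r - t)) \<le> int (r + r div 2 - 2)"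
    if "0 \<le> t" "t < int r" for t
    unfolding p C using min_layer_moves_exact_cover_upper that assms(2) by simp
  show "int (r + r div 2 - 2) \<le> min_layer_moves (int ((n + d - 1) div d)) \<bar>z\<bar>"
    if "z mod int r = int (r div 2)" for z
    unfolding p C using min_layer_moves_exact_cover_lower that assms(2) by (simp add: zdiv_int)
qed

lemma rcr_diam_double_cover:
  assumes "2 * n \<le> d * r"
  defines "P \<equiv> (n + d - 1) div d"
  shows "rcr_diam n d r = n + max (r div 2) (2 * P - 2)"
proof -
  have "0 < P"
    using le_mult_iff_ceiling_le[OF d_pos, of n 0] n_pos unfolding P_def by simp
  have "2 * P < r + 2"
    unfolding P_def by (rule double_ceiling_less[OF d_pos assms(1)])
  have C: "int (max (r div 2) (2 * P - 2)) = max (int r div 2) (2 * int P - 2)"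
    using \<open>0 < P\<close> by (simp add: zdiv_int)
  have "2 * (int r div 2) \<le> int r" by linarith
  have upper: "min (min_layer_moves (int P) t) (min_layer_moves (int P) (int r - t))
      \<le> int (max (r div 2) (2 * P - 2))" if "0 \<le> t" "t < int r" for t
    unfolding C using that by (rule min_layer_moves_double_cover_upper)
  \<comment> \<open>the farthest target layer is the antipodal one if \<open>r div 2\<close> dominates, the starting one otherwise\<close>
  show ?thesis
  proof (cases "2 * P - 2 \<le> r div 2")
    case True
    show ?thesis
    proof (rule rcr_diam_eqI[where y = "r div 2"])
      show "r div 2 < r" using r_pos by simp
      show "int (max (r div 2) (2 * P - 2)) \<le> min_layer_moves (int ((n + d - 1) div d)) \<bar>z\<bar>"
        if "z mod int r = int (r div 2)" for z
        using abs_cases_of_mod_eq[of "int r" z "int r div 2"] that r_pos True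
          \<open>2 * (int r div 2) \<le> int r\<close>
        unfolding C P_def[symmetric] by (auto simp: min_layer_moves_def zdiv_int le_max_iff_disj)
    qed (use upper P_def in auto)
  next
    case False
    show ?thesis
    proof (rule rcr_diam_eqI[where y = 0])
      show "0 < r" using r_pos .
      show "int (max (r div 2) (2 * P - 2)) \<le> min_layer_moves (int ((n + d - 1) div d)) \<bar>z\<bar>"
        if "z mod int r = int 0" for z
        using abs_cases_of_mod_eq[of "int r" z 0] that r_pos False \<open>2 * P < r + 2\<close>
        unfolding C P_def[symmetric] by (auto simp: min_layer_moves_def zdiv_int)
    qed (use upper P_def in auto)
  qed
qed

end

theorem mainTheorem9:
  fixes n d r :: nat
  assumes "n \<ge> 2" and "d \<ge> 1" and "r \<ge> 3" and "n \<ge> d" and "n dvd d * r"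
  shows "(d * r = n \<longrightarrow>
            (r = 3 \<longrightarrow> rcr_diam n d r = n + r) \<and>
            (r \<ge> 4 \<longrightarrow> rcr_diam n d r = n + (3 * r) div 2 - 2))
       \<and> (d * r \<ge> 2 * n \<longrightarrow>
            rcr_diam n d r = n + max (r div 2) (2 * ((n + d - 1) div d) - 2))"
proof (intro conjI impI)
  have pos: "0 < n" "0 < d" "0 < r" using assms(1-3) by simp_all
  note exact_cover_3 = rcr_diam_exact_cover_3[OF pos assms(5)]
  note exact_cover = rcr_diam_exact_cover[OF pos assms(5)]
  note double_cover = rcr_diam_double_cover[OF pos assms(5)]
  show "rcr_diam n d r = n + r" if "d * r = n" and "r = 3"
    using exact_cover_3 that .
  show "rcr_diam n d r = n + (3 * r) div 2 - 2" if "d * r = n" and "4 \<le> r"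
  proof -
    have "(3 * r) div 2 = r + r div 2" by presburger
    then show ?thesis using exact_cover that by simp
  qed
  show "rcr_diam n d r = n + max (r div 2) (2 * ((n + d - 1) div d) - 2)" if "2 * n \<le> d * r"
    using double_cover that .
qed

end
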